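(* For all finite sets of formulas $\Gamma,\Delta$: $\Gamma\Vdash\Delta$ if and only if $\Gamma\Vdash_{\mathcal{ST}}\Delta$.
   Context: Fix a countably infinite set $\mathsf{At}$ of atoms. Formulas are built from atoms and the constant $\bot$ using the binary connectives $\land,\lor,\to$. All contexts ($\Gamma,\Delta,\Theta,\Sigma,\dots$) are finite sets (not multisets) of formulas; a comma denotes union; a subscript $\mathsf{At}$ indicates a finite set of atoms. An atomic sequent has the form $\Gamma_{\mathsf{At}} \Rightarrow \Delta_{\mathsf{At}}$. An atomic rule has finitely many (possibly zero) atomic sequents as premises and one atomic sequent as conclusion; a rule with zero premises is an atomic axiom. A base is a (possibly empty) set of atomic rules; $\mathcal{C}\supseteq\mathcal{B}$ ($\mathcal{C}$ extends $\mathcal{B}$) if $\mathcal{C}$ contains every rule of $\mathcal{B}$. Derivability $\vdash_{\mathcal{B}}$ of atomic sequents is the least relation such that: (Axiom/Weakening) if an atomic axiom with conclusion $\Gamma_{\mathsf{At}}\Rightarrow\Delta_{\mathsf{At}}$ is in $\mathcal{B}$, then $\vdash_{\mathcal{B}} \Theta_{\mathsf{At}},\Gamma_{\mathsf{At}}\Rightarrow\Delta_{\mathsf{At}},\Sigma_{\mathsf{At}}$ for all sets of atoms $\Theta_{\mathsf{At}},\Sigma_{\mathsf{At}}$; (Mix) if a rule with premises $\Gamma^i_{\mathsf{At}}\Rightarrow\Delta^i_{\mathsf{At}}$ ($1\le i\le n$) and conclusion $\Gamma_{\mathsf{At}}\Rightarrow\Delta_{\mathsf{At}}$ is in $\mathcal{B}$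 and $\vdash_{\mathcal{B}} \Theta^i_{\mathsf{At}},\Gamma^i_{\mathsf{At}}\Rightarrow\Delta^i_{\mathsf{At}},\Sigma^i_{\mathsf{At}}$ for each $i$, then $\vdash_{\mathcal{B}} \Theta^1_{\mathsf{At}},\dots,\Theta^n_{\mathsf{At}},\Gamma_{\mathsf{At}}\Rightarrow\Delta_{\mathsf{At}},\Sigma^1_{\mathsf{At}},\dots,\Sigma^n_{\mathsf{At}}$. Support $\Vdash_{\mathcal{B}}$: (At) $\Vdash_{\mathcal{B}}\Gamma_{\mathsf{At}}$ iff $\vdash_{\mathcal{B}}\ \Rightarrow\Gamma_{\mathsf{At}}$; ($\land$) $\Vdash_{\mathcal{B}} A\land B,\Gamma$ iff $\Vdash_{\mathcal{B}}A,\Gamma$ and $\Vdash_{\mathcal{B}}B,\Gamma$; ($\lor$) $\Vdash_{\mathcal{B}}A\lor B,\Gamma$ iff $\Vdash_{\mathcal{B}}A,B,\Gamma$; ($\to$) $\Vdash_{\mathcal{B}}A\to B,\Gamma$ iff $A\Vdash_{\mathcal{B}}B,\Gamma$; ($\bot$) $\Vdash_{\mathcal{B}}\bot,\Gamma$ iff $\Vdash_{\mathcal{B}}\Gamma$; (Inf) for $n\ge1$, $\{A^1,\dots,A^n\}\Vdash_{\mathcal{B}}\Delta$ iff for every $\mathcal{C}\supseteq\mathcal{B}$ and all sets of atoms $\Theta^1_{\mathsf{At}},\dots,\Theta^n_{\mathsf{At}}$, if $\Vdash_{\mathcal{C}}\Theta^i_{\mathsf{At}},A^i$ for all $i$ then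 $\Vdash_{\mathcal{C}}\Theta^1_{\mathsf{At}},\dots,\Theta^n_{\mathsf{At}},\Delta$ (and $\varnothing\Vdash_{\mathcal{B}}\Delta$ means $\Vdash_{\mathcal{B}}\Delta$). The atomic identity rule $\mathsf{Ainit}$ is the atomic axiom $\Gamma_{\mathsf{At}},p\Rightarrow p,\Delta_{\mathsf{At}}$; the atomic cut rule $\mathsf{Acut}$ has premises $\Gamma^1_{\mathsf{At}}\Rightarrow\Delta^1_{\mathsf{At}},p$ and $p,\Gamma^2_{\mathsf{At}}\Rightarrow\Delta^2_{\mathsf{At}}$ and conclusion $\Gamma^1_{\mathsf{At}},\Gamma^2_{\mathsf{At}}\Rightarrow\Delta^1_{\mathsf{At}},\Delta^2_{\mathsf{At}}$. $\mathcal{ST}$ is the base consisting of all instances of $\mathsf{Ainit}$ and $\mathsf{Acut}$ (all atoms $p$, all sets of atoms). Validity: $\Gamma\Vdash\Delta$ iff $\Gamma\Vdash_{\mathcal{B}}\Delta$ for every base $\mathcal{B}\supseteq\mathcal{ST}$. *)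

theory Defs
  imports Main "HOL-Library.FSet"
begin

type_synonym atom = nat

datatype form = Atom atom | Bot | And form form | Or form form | Imp form form

type_synonym aseq = "atom fset \<times> atom fset"
type_synonym arule = "aseq list \<times> aseq"
type_synonym base = "arule set"

inductive derivable :: "base \<Rightarrow> aseq \<Rightarrow> bool" for \<B> :: base where
  axiom: "([], (G, D)) \<in> \<B> \<Longrightarrow> derivable \<B> (\<Theta> |\<union>| G, D |\<union>| \<Sigma>)"
| mix: "(ps, (G, D)) \<in> \<B> \<Longrightarrow>
        (\<And>i. i < length ps \<Longrightarrow>
             derivable \<B> (\<Theta> i |\<union>| fst (ps ! i), snd (ps ! i) |\<union>| \<Sigma> i)) \<Longrightarrow>
        derivable \<B> (ffUnion (\<Theta> |`| fset_of_list [0..<length ps]) |\<union>| G,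
                     D |\<union>| ffUnion (\<Sigma> |`| fset_of_list [0..<length ps]))"

fun is_atom :: "form \<Rightarrow> bool" where
  "is_atom (Atom p) = True"
| "is_atom _ = False"

fun wt :: "form \<Rightarrow> nat" where
  "wt (Atom p) = 0"
| "wt Bot = 1"
| "wt (And a b) = Suc (wt a + wt b)"
| "wt (Or a b) = Suc (wt a + wt b)"
| "wt (Imp a b) = Suc (wt a + wt b)"

definition fwt :: "form fset \<Rightarrow> nat" where
  "fwt \<Delta> = (\<Sum>A\<in>fset \<Delta>. wt A)"

lemma fwt_remove: "A |\<in>| \<Delta> \<Longrightarrow> fwt \<Delta> = wt A + fwt (\<Delta> |-| {|A|})"
  unfolding fwt_def by (simp add: sum.remove)

lemma fwt_finsert_le: "fwt (finsert B \<Gamma>) \<le> wt B + fwt \<Gamma>"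
  unfolding fwt_def by (simp add: sum.insert_if)

lemma fwt_atoms_le: "fwt (Atom |`| \<Theta> |\<union>| X) \<le> fwt X"
proof -
  have "fwt (Atom |`| \<Theta> |\<union>| X) \<le> fwt (Atom |`| \<Theta>) + fwt X"
    unfolding fwt_def by (simp add: sum_Un_nat)
  moreover have "fwt (Atom |`| \<Theta>) = 0" unfolding fwt_def by (simp add: sum.reindex inj_on_def)
  ultimately show ?thesis by simp
qed

lemma fwt_atoms_ins_le: "fwt (finsert B (Atom |`| \<Theta>)) \<le> wt B"
  using fwt_atoms_le[of \<Theta> "{|B|}"] by (simp add: fwt_def)

lemma fwt_ins2_le: "fwt (finsert a (finsert b G)) \<le> wt a + wt b + fwt G"
  using fwt_finsert_le[of a "finsert b G"] fwt_finsert_le[of b G] by simp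

lemma fwt_ins_atoms_le: "fwt (finsert b (Atom |`| T |\<union>| G)) \<le> wt b + fwt G"
proof -
  have "finsert b (Atom |`| T |\<union>| G) = Atom |`| T |\<union>| finsert b G" by auto
  then show ?thesis using fwt_atoms_le[of T "finsert b G"] fwt_finsert_le[of b G] by simp
qed

(* Otherwise the clause for the principal formula applies; we require it for
   every non-atomic A \<in> \<Delta>, with \<Delta> = A, (\<Delta> - {A}). *)
function (sequential) supp :: "base \<Rightarrow> form fset \<Rightarrow> bool" where
  "supp \<B> \<Delta> =
    (if (\<forall>A\<in>fset \<Delta>. is_atom A)
     then (\<exists>X. \<Delta> = Atom |`| X \<and> derivable \<B> ({||}, X))
     else (\<forall>A\<in>fset \<Delta>.
       (case A of
          Atom p \<Rightarrow> True
        | Bot \<Rightarrow> supp \<B> (\<Delta> |-| {|A|})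
        | And A1 A2 \<Rightarrow> supp \<B> (finsert A1 (\<Delta> |-| {|A|})) \<and> supp \<B> (finsert A2 (\<Delta> |-| {|A|}))
        | Or A1 A2 \<Rightarrow> supp \<B> (finsert A1 (finsert A2 (\<Delta> |-| {|A|})))
        | Imp A1 A2 \<Rightarrow>
            (\<forall>\<C> \<Theta>. \<B> \<subseteq> \<C> \<longrightarrow> supp \<C> (finsert A1 (Atom |`| \<Theta>)) \<longrightarrow>
                      supp \<C> (Atom |`| \<Theta> |\<union>| finsert A2 (\<Delta> |-| {|A|}))))))"
  by pat_completeness auto
termination
proof (relation "measure (\<lambda>(\<B>, \<Delta>). fwt \<Delta>)")
  show "wf (measure (\<lambda>(\<B>, \<Delta>). fwt \<Delta>))" by simp
qed (auto simp: fwt_remove fwt_finsert_le fwt_atoms_le fwt_atoms_ins_le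
   intro: le_less_trans[OF fwt_ins2_le] le_less_trans[OF fwt_ins_atoms_le] le_less_trans[OF fwt_atoms_ins_le]
          intro: le_less_trans[OF fwt_finsert_le] le_less_trans[OF fwt_atoms_le])

definition infer :: "form fset \<Rightarrow> base \<Rightarrow> form fset \<Rightarrow> bool" where
  "infer \<Gamma> \<B> \<Delta> =
    (if \<Gamma> = {||} then supp \<B> \<Delta>
     else (\<forall>\<C> \<Theta>. \<B> \<subseteq> \<C> \<longrightarrow> (\<forall>A\<in>fset \<Gamma>. supp \<C> (finsert A (Atom |`| \<Theta> A))) \<longrightarrow>
                 supp \<C> (Atom |`| ffUnion (\<Theta> |`| \<Gamma>) |\<union>| \<Delta>)))"

definition ST :: base where
  "ST = {([], (G |\<union>| {|p|}, {|p|} |\<union>| D)) | G D p. True}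
      \<union> {([(G1, D1 |\<union>| {|p|}), ({|p|} |\<union>| G2, D2)], (G1 |\<union>| G2, D1 |\<union>| D2)) | G1 D1 G2 D2 p. True}"

definition valid :: "form fset \<Rightarrow> form fset \<Rightarrow> bool" where
  "valid \<Gamma> \<Delta> = (\<forall>\<B>. ST \<subseteq> \<B> \<longrightarrow> infer \<Gamma> \<B> \<Delta>)"

end

theory Submission
  imports Defs
begin

(* Validity quantifies over all bases extending ST, and every notion involved is monotone
   under extension of the base: derivability trivially, inference because its clause already
   ranges over all extensions, and support by induction along its defining clauses. *)

lemma derivable_mono: "derivable \<B> s \<Longrightarrow> \<B> \<subseteq> \<C> \<Longrightarrow> derivable \<C> s"
proof (induction rule: derivable.induct)
  case (axiom G D \<Theta> \<Sigma>)
  then show ?case by (auto intro: derivable.axiom)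
next
  case (mix ps G D \<Theta> \<Sigma>)
  then show ?case by (auto intro!: derivable.mix)
qed

lemma supp_mono: "supp \<B> \<Delta> \<Longrightarrow> \<B> \<subseteq> \<C> \<Longrightarrow> supp \<C> \<Delta>"
proof (induction \<B> \<Delta> arbitrary: \<C> rule: supp.induct)
  case (1 \<B> \<Delta>)
  show ?case
  proof (cases "\<forall>A\<in>fset \<Delta>. is_atom A")
    case True
    with "1.prems" show ?thesis by (auto intro: derivable_mono)
  next
    case False
    note principal = "1.prems"(1)[unfolded supp.simps[of \<B> \<Delta>] if_not_P[OF False]]
    show ?thesis
      unfolding supp.simps[of \<C> \<Delta>] if_not_P[OF False]
    proof (intro ballI, goal_cases member)
      case (member A)
      then show ?case
        using bspec[OF principal member] "1.IH"[OF False member] \<open>\<B> \<subseteq> \<C>\<close>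
        by (cases A) fastforce+
    qed
  qed
qed

lemma infer_mono: "infer \<Gamma> \<B> \<Delta> \<Longrightarrow> \<B> \<subseteq> \<C> \<Longrightarrow> infer \<Gamma> \<C> \<Delta>"
  unfolding infer_def by (metis supp_mono order_trans)

theorem theorem1:
  fixes \<Gamma> \<Delta> :: "form fset"
  shows "valid \<Gamma> \<Delta> \<longleftrightarrow> infer \<Gamma> ST \<Delta>"
  unfolding valid_def by (auto intro: infer_mono)

end
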